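(* Let $q$ be a prime power, $m\ge2$, $1\le k<n$. The set $\mathcal R_1^*\cap \mathcal K$ is in one-to-one correspondence with the set $$V_R := \{(\boldsymbol\alpha,\boldsymbol\beta)\in \mathbb{F}_{q^m}^k \times \mathbb{F}_{q^m}^{n-k-1} \mid \alpha_i,\ \alpha_i\beta_j \in \ker(\mathrm{Tr}_{\mathbb{F}_{q^m}/\mathbb{F}_q})\setminus\{0\} \text{ for all } i,j\},$$ which equals $\{(\boldsymbol\alpha,\boldsymbol\beta) \mid \alpha_i \in \ker(\mathrm{Tr}_{\mathbb{F}_{q^m}/\mathbb{F}_q})\setminus\{0\},\ \beta_j \in \bigcap_{i=1}^k\ker(\mathrm{T}_{\alpha_i})\setminus\{0\}\}$, via the map $\psi:V_R \to \mathcal R_1^*\cap \mathcal K$ given by $$(\boldsymbol\alpha,\boldsymbol\beta)\longmapsto (\alpha_1,\dots,\alpha_k)^T\,(1, \beta_1,\ldots, \beta_{n-k-1}).$$ Consequently $|\mathcal R_1^*\cap \mathcal K|\leq (q^{m-1}-1)^{n-1}$.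
   Context: $\mathrm{Tr}_{\mathbb{F}_{q^m}/\mathbb{F}_q}(\alpha)=\sum_{i=0}^{m-1}\alpha^{q^i}$, and for $\alpha\in\mathbb{F}_{q^m}^*$, $\mathrm{T}_\alpha:\mathbb{F}_{q^m}\to\mathbb{F}_q$ is $\beta\mapsto \mathrm{Tr}_{\mathbb{F}_{q^m}/\mathbb{F}_q}(\alpha\beta)$. $\mathcal R_1^*:=\{A\in (\mathbb{F}_{q^m}^* )^{k\times (n-k)} \mid \mathrm{rk}(A)=1\}$ and $\mathcal K:=\left(\ker \mathrm{Tr}_{\mathbb{F}_{q^m}/\mathbb{F}_q}\right)^{k\times(n-k)}$. *)

theory Defs
  imports "Jordan_Normal_Form.DL_Rank" "HOL-Computational_Algebra.Primes"
begin

text \<open>The field F_{q^m} is modelled by a finite field type 'a with CARD('a) = q^m.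
  The trace to the (unique) subfield F_q is given by its defining formula.\<close>

definition trace_qm :: "nat \<Rightarrow> nat \<Rightarrow> 'a::field \<Rightarrow> 'a" where
  "trace_qm q m a = (\<Sum>i<m. a ^ (q ^ i))"

definition T_map :: "nat \<Rightarrow> nat \<Rightarrow> 'a::field \<Rightarrow> 'a \<Rightarrow> 'a" where
  "T_map q m a b = trace_qm q m (a * b)"

definition ker_tr :: "nat \<Rightarrow> nat \<Rightarrow> 'a::field set" where
  "ker_tr q m = {a. trace_qm q m a = 0}"

definition rank_mat :: "'a::field mat \<Rightarrow> nat" where
  "rank_mat A = vec_space.rank (dim_row A) A"

definition R1_star :: "nat \<Rightarrow> nat \<Rightarrow> 'a::field mat set" where
  "R1_star k n = {A \<in> carrier_mat k (n - k).
      (\<forall>i<k. \<forall>j<n - k. A $$ (i, j) \<noteq> 0) \<and> rank_mat A = 1}"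

definition K_set :: "nat \<Rightarrow> nat \<Rightarrow> nat \<Rightarrow> nat \<Rightarrow> 'a::field mat set" where
  "K_set q m k n = {A \<in> carrier_mat k (n - k).
      \<forall>i<k. \<forall>j<n - k. A $$ (i, j) \<in> ker_tr q m}"

definition V_R :: "nat \<Rightarrow> nat \<Rightarrow> nat \<Rightarrow> nat \<Rightarrow> ('a::field vec \<times> 'a vec) set" where
  "V_R q m k n = {(\<alpha>, \<beta>). \<alpha> \<in> carrier_vec k \<and> \<beta> \<in> carrier_vec (n - k - 1) \<and>
      (\<forall>i<k. \<alpha> $ i \<in> ker_tr q m - {0} \<and>
         (\<forall>j<n - k - 1. \<alpha> $ i * \<beta> $ j \<in> ker_tr q m - {0}))}"

definition V_R' :: "nat \<Rightarrow> nat \<Rightarrow> nat \<Rightarrow> nat \<Rightarrow> ('a::field vec \<times> 'a vec) set" where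
  "V_R' q m k n = {(\<alpha>, \<beta>). \<alpha> \<in> carrier_vec k \<and> \<beta> \<in> carrier_vec (n - k - 1) \<and>
      (\<forall>i<k. \<alpha> $ i \<in> ker_tr q m - {0}) \<and>
      (\<forall>j<n - k - 1. \<beta> $ j \<in> (\<Inter>i\<in>{..<k}. {b. T_map q m (\<alpha> $ i) b = 0}) - {0})}"

definition psi :: "nat \<Rightarrow> nat \<Rightarrow> 'a::field vec \<times> 'a vec \<Rightarrow> 'a mat" where
  "psi k n = (\<lambda>(\<alpha>, \<beta>). mat k (n - k)
      (\<lambda>(i, j). \<alpha> $ i * (if j = 0 then 1 else \<beta> $ (j - 1))))"

end

theory Submission
  imports Defs "Jordan_Normal_Form.DL_Rank_Submatrix" "HOL-Computational_Algebra.Polynomial"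
begin

text \<open>A rank-one matrix A with nonzero entries factors as A = \<alpha> (1, \<beta>) with
  \<alpha>_i = A_{i,0} and \<beta>_j = A_{0,j+1} / A_{0,0}, because all its 2 \<times> 2 minors vanish;
  normalising the first entry of the row vector to 1 makes the factorisation unique.
  The trace conditions on the entries of A are then exactly the conditions defining V_R.
  For the bound, a pair (\<alpha>, \<beta>) \<in> V_R is determined by the n - 1 nonzero trace-kernel
  elements \<alpha>_1, \<dots>, \<alpha>_k, \<alpha>_1\<beta>_1, \<dots>, \<alpha>_1\<beta>_{n-k-1}, and the trace kernel is the root set of
  the polynomial \<Sum>_{i<m} X^{q^i} of degree q^{m-1}.\<close>

lemma det_mat_2x2:
  assumes "A \<in> carrier_mat 2 2"
  shows "det A = A $$ (0,0) * A $$ (1,1) - A $$ (0,1) * A $$ (1,0)"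
proof -
  have "det A = (\<Sum>j<2. A $$ (0,j) * cofactor A 0 j)"
    using laplace_expansion_row[OF assms, of 0] by simp
  also have "\<dots> = A $$ (0,0) * cofactor A 0 0 + A $$ (0,1) * cofactor A 0 1"
    by (simp add: numeral_2_eq_2)
  also have "cofactor A 0 0 = A $$ (1,1)"
    unfolding cofactor_def using assms by (subst det_single) (auto simp: mat_delete_def)
  also have "cofactor A 0 1 = - A $$ (1,0)"
    unfolding cofactor_def using assms by (subst det_single) (auto simp: mat_delete_def)
  finally show ?thesis by (simp add: algebra_simps)
qed

lemma rank_mat_pos_if_nonzero_entry:
  fixes A :: "'a::field mat"
  assumes A: "A \<in> carrier_mat nr nc" and ij: "i < nr" "j < nc" and nz: "A $$ (i,j) \<noteq> 0"
  shows "1 \<le> rank_mat A"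
proof -
  let ?M = "submatrix A {i} {j}"
  have rows: "{a. a < dim_row A \<and> a \<in> {i}} = {i}" and cols: "{b. b < dim_col A \<and> b \<in> {j}} = {j}"
    using A ij by auto
  have before: "{a \<in> {i}. a < i} = {}" "{b \<in> {j}. b < j} = {}"
    by auto
  have "?M \<in> carrier_mat 1 1"
    by (rule carrier_matI) (simp_all only: dim_submatrix rows cols, simp_all)
  moreover have "?M $$ (0,0) = A $$ (i,j)"
    using submatrix_index_card[of i A j "{i}" "{j}", unfolded before] A ij by simp
  ultimately have "det ?M \<noteq> 0"
    using nz by (simp add: det_single)
  then have "card {b. b < nc \<and> b \<in> {j}} \<le> vec_space.rank nr A"
    using vec_space.rank_gt_minor[OF A] by blast
  then show ?thesis
    using A cols unfolding rank_mat_def by simp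
qed

lemma rank_mat_le_1_minor:
  fixes A :: "'a::field mat"
  assumes A: "A \<in> carrier_mat nr nc" and rk: "rank_mat A \<le> 1"
    and i: "i < i'" "i' < nr" and j: "j < j'" "j' < nc"
  shows "A $$ (i,j) * A $$ (i',j') = A $$ (i,j') * A $$ (i',j)"
proof (rule ccontr)
  let ?M = "submatrix A {i,i'} {j,j'}"
  assume ne: "A $$ (i,j) * A $$ (i',j') \<noteq> A $$ (i,j') * A $$ (i',j)"
  have rows: "{a. a < dim_row A \<and> a \<in> {i,i'}} = {i,i'}" and cols: "{b. b < dim_col A \<and> b \<in> {j,j'}} = {j,j'}"
    using A i j by auto
  have card2: "card {i,i'} = 2" "card {j,j'} = 2"
    using i j by auto
  have before: "{a \<in> {i,i'}. a < i} = {}" "{a \<in> {i,i'}. a < i'} = {i}"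
    "{b \<in> {j,j'}. b < j} = {}" "{b \<in> {j,j'}. b < j'} = {j}"
    using i j by auto
  have entry: "?M $$ (card {a \<in> {i,i'}. a < r}, card {b \<in> {j,j'}. b < c}) = A $$ (r,c)"
    if "r \<in> {i,i'}" "c \<in> {j,j'}" for r c
    by (rule submatrix_index_card) (use that A i j in auto)
  have "?M \<in> carrier_mat 2 2"
    by (rule carrier_matI) (simp_all only: dim_submatrix rows cols card2)
  then have "det ?M = A $$ (i,j) * A $$ (i',j') - A $$ (i,j') * A $$ (i',j)"
    using entry[of i j, unfolded before] entry[of i j', unfolded before]
      entry[of i' j, unfolded before] entry[of i' j', unfolded before]
    by (simp add: det_mat_2x2)
  then have "card {b. b < nc \<and> b \<in> {j,j'}} \<le> vec_space.rank nr A"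
    using vec_space.rank_gt_minor[OF A, of "{i,i'}" "{j,j'}"] ne by simp
  then show False
    using A cols card2 rk unfolding rank_mat_def by simp
qed

definition trace_poly :: "nat \<Rightarrow> nat \<Rightarrow> 'a::field poly" where
  "trace_poly q m = (\<Sum>i<m. monom 1 (q ^ i))"

lemma poly_trace_poly: "poly (trace_poly q m) a = trace_qm q m a"
  unfolding trace_poly_def trace_qm_def by (simp add: poly_sum poly_monom)

lemma degree_trace_poly:
  assumes "2 \<le> q"
  shows "degree (trace_poly q (Suc m) :: 'a::field poly) = q ^ m"
proof (induction m)
  case 0
  then show ?case by (simp add: trace_poly_def degree_monom_eq)
next
  case (Suc m)
  have "q ^ m < q ^ Suc m"
    using assms by simp
  then show ?case
    using Suc unfolding trace_poly_def
    by (simp only: sum.lessThan_Suc, subst degree_add_eq_right) (simp_all add: degree_monom_eq)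
qed

lemma card_ker_tr_le:
  assumes "2 \<le> q" "1 \<le> m"
  shows "card (ker_tr q m :: 'a::field set) \<le> q ^ (m - 1)"
proof -
  have deg: "degree (trace_poly q m :: 'a poly) = q ^ (m - 1)"
    using degree_trace_poly[OF assms(1), of "m - 1"] assms(2) by simp
  then have "trace_poly q m \<noteq> (0 :: 'a poly)"
    using assms(1) by (metis degree_0 power_eq_0_iff not_numeral_le_zero)
  moreover have "ker_tr q m = {x :: 'a. poly (trace_poly q m) x = 0}"
    unfolding ker_tr_def poly_trace_poly ..
  ultimately show ?thesis
    using card_poly_roots_bound deg by metis
qed

lemma zero_in_ker_tr: "0 < q \<Longrightarrow> (0::'a::field) \<in> ker_tr q m"
  unfolding ker_tr_def trace_qm_def by simp

lemma V_R_eq_V_R':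
  assumes "1 \<le> k"
  shows "V_R q m k n = (V_R' q m k n :: ('a::field vec \<times> 'a vec) set)"
proof -
  have "(\<forall>i<k. \<alpha> $ i \<in> ker_tr q m - {0} \<and> (\<forall>j<n - k - 1. \<alpha> $ i * \<beta> $ j \<in> ker_tr q m - {0}))
    \<longleftrightarrow> (\<forall>i<k. \<alpha> $ i \<in> ker_tr q m - {0}) \<and>
        (\<forall>j<n - k - 1. \<beta> $ j \<in> (\<Inter>i\<in>{..<k}. {b. T_map q m (\<alpha> $ i) b = 0}) - {0})"
    (is "?L \<longleftrightarrow> ?R") for \<alpha> \<beta> :: "'a vec"
  proof
    assume L: ?L
    \<comment> \<open>Nonvanishing of \<beta>_j is read off from \<alpha>_0 \<beta>_j \<noteq> 0, which needs k \<ge> 1.\<close>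
    have "\<beta> $ j \<noteq> 0" if "j < n - k - 1" for j
      using L that assms by fastforce
    then show ?R
      using L unfolding T_map_def ker_tr_def by auto
  next
    assume ?R
    then show ?L
      unfolding T_map_def ker_tr_def by auto
  qed
  then show ?thesis
    unfolding V_R_def V_R'_def by simp
qed

lemma psi_index:
  "i < k \<Longrightarrow> j < n - k \<Longrightarrow> psi k n (a, b) $$ (i, j) = a $ i * (if j = 0 then 1 else b $ (j - 1))"
  unfolding psi_def by simp

lemma psi_carrier: "psi k n ab \<in> carrier_mat k (n - k)"
  unfolding psi_def by (cases ab) auto

lemma inj_on_psi:
  assumes "1 \<le> k" "k < n"
  shows "inj_on (psi k n) (V_R q m k n :: ('a::field vec \<times> 'a vec) set)"
proof (rule inj_onI, clarify)
  fix a b a' b' :: "'a vec"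
  assume ab: "(a, b) \<in> V_R q m k n" and ab': "(a', b') \<in> V_R q m k n"
    and eq: "psi k n (a, b) = psi k n (a', b')"
  have dims: "a \<in> carrier_vec k" "b \<in> carrier_vec (n - k - 1)"
    "a' \<in> carrier_vec k" "b' \<in> carrier_vec (n - k - 1)" and a0: "a $ 0 \<noteq> 0"
    using ab ab' assms unfolding V_R_def by auto
  have entries: "a $ i * (if j = 0 then 1 else b $ (j - 1)) = a' $ i * (if j = 0 then 1 else b' $ (j - 1))"
    if "i < k" "j < n - k" for i j
    using arg_cong[OF eq, of "\<lambda>M. M $$ (i, j)"] that by (simp add: psi_index)
  have "a = a'"
    using entries[of _ 0] dims assms by (intro eq_vecI) auto
  moreover have "b = b'"
  proof (rule eq_vecI)
    fix j assume "j < dim_vec b'"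
    then have "a $ 0 * b $ j = a' $ 0 * b' $ j"
      using entries[of 0 "Suc j"] dims assms by simp
    then show "b $ j = b' $ j"
      using \<open>a = a'\<close> a0 by simp
  qed (use dims in simp)
  ultimately show "a = a' \<and> b = b'" ..
qed

lemma psi_in_R1_star_K_set:
  assumes "1 \<le> k" "k < n" "(a, b) \<in> (V_R q m k n :: ('a::field vec \<times> 'a vec) set)"
  shows "psi k n (a, b) \<in> R1_star k n \<inter> K_set q m k n"
proof -
  have V: "\<forall>i<k. a $ i \<in> ker_tr q m - {0} \<and> (\<forall>j<n - k - 1. a $ i * b $ j \<in> ker_tr q m - {0})"
    using assms(3) unfolding V_R_def by auto
  let ?A = "psi k n (a, b)"
  have A: "?A \<in> carrier_mat k (n - k)"
    by (rule psi_carrier)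
  have entries: "?A $$ (i, j) \<in> ker_tr q m - {0}" if "i < k" "j < n - k" for i j
    using V that by (cases j) (auto simp: psi_index)
  have "dim_row ?A = k"
    using A by simp
  then have "rank_mat ?A \<le> 1"
    unfolding rank_mat_def \<open>dim_row ?A = k\<close>
    by (intro vec_space.rank_le_1_product_entries[OF A, of "\<lambda>i. a $ i" "\<lambda>j. if j = 0 then 1 else b $ (j - 1)"])
      (use A in \<open>auto simp: psi_index\<close>)
  moreover have "1 \<le> rank_mat ?A"
    using rank_mat_pos_if_nonzero_entry[OF A, of 0 0] entries[of 0 0] assms(1,2) by auto
  ultimately show ?thesis
    using A entries unfolding R1_star_def K_set_def by auto
qed

lemma R1_star_K_set_subset_psi_image:
  assumes "1 \<le> k" "k < n" "A \<in> R1_star k n \<inter> K_set q m k n"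
  shows "A \<in> psi k n ` (V_R q m k n :: ('a::field vec \<times> 'a vec) set)"
proof -
  have A: "A \<in> carrier_mat k (n - k)" and rk: "rank_mat A = 1"
    and entries: "\<And>i j. i < k \<Longrightarrow> j < n - k \<Longrightarrow> A $$ (i, j) \<in> ker_tr q m - {0}"
    using assms(3) unfolding R1_star_def K_set_def by auto
  define a where "a = vec k (\<lambda>i. A $$ (i, 0))"
  define b where "b = vec (n - k - 1) (\<lambda>j. A $$ (0, Suc j) / A $$ (0, 0))"
  have A00: "A $$ (0, 0) \<noteq> 0"
    using entries[of 0 0] assms by auto
  have factor: "a $ i * b $ j = A $$ (i, Suc j)" if "i < k" "j < n - k - 1" for i j
  proof -
    have "A $$ (0, 0) * A $$ (i, Suc j) = A $$ (0, Suc j) * A $$ (i, 0)"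
      using rank_mat_le_1_minor[OF A, of 0 i 0 "Suc j"] rk that by (cases "i = 0") auto
    then show ?thesis
      unfolding a_def b_def using that A00 by (simp add: field_simps)
  qed
  have "a $ i \<in> ker_tr q m - {0} \<and> (\<forall>j<n - k - 1. a $ i * b $ j \<in> ker_tr q m - {0})" if "i < k" for i
    using entries[of i 0] entries[of i "Suc _"] factor[of i] that assms(2) by (auto simp: a_def)
  then have "(a, b) \<in> V_R q m k n"
    unfolding V_R_def by (simp add: a_def b_def)
  moreover have "psi k n (a, b) = A"
  proof (rule eq_matI)
    fix i j assume "i < dim_row A" "j < dim_col A"
    then show "psi k n (a, b) $$ (i, j) = A $$ (i, j)"
      using A factor by (cases j) (auto simp: psi_index a_def)
  qed (use A psi_carrier[of k n "(a, b)"] in auto)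
  ultimately show ?thesis
    by force
qed

lemma bij_betw_psi:
  assumes "1 \<le> k" "k < n"
  shows "bij_betw (psi k n) (V_R q m k n :: ('a::field vec \<times> 'a vec) set) (R1_star k n \<inter> K_set q m k n)"
  unfolding bij_betw_def
proof (intro conjI inj_on_psi[OF assms] subset_antisym subsetI)
  show "A \<in> R1_star k n \<inter> K_set q m k n" if "A \<in> psi k n ` V_R q m k n" for A
    using that psi_in_R1_star_K_set[OF assms] by auto
qed (use R1_star_K_set_subset_psi_image[OF assms] in blast)

lemma card_V_R_le:
  assumes "1 \<le> k" "k < n"
  shows "card (V_R q m k n :: ('a::{finite,field} vec \<times> 'a vec) set) \<le> card (ker_tr q m - {0::'a}) ^ (n - 1)"
proof -
  let ?S = "ker_tr q m - {0::'a}"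
  define f :: "'a vec \<times> 'a vec \<Rightarrow> 'a list" where
    "f = (\<lambda>(a, b). list_of_vec a @ map (\<lambda>j. a $ 0 * b $ j) [0..<n - k - 1])"
  have inj: "inj_on f (V_R q m k n)"
  proof (rule inj_onI, clarify)
    fix a b a' b' :: "'a vec"
    assume ab: "(a, b) \<in> V_R q m k n" and ab': "(a', b') \<in> V_R q m k n" and eq: "f (a, b) = f (a', b')"
    have dims: "a \<in> carrier_vec k" "b \<in> carrier_vec (n - k - 1)"
      "a' \<in> carrier_vec k" "b' \<in> carrier_vec (n - k - 1)" and a0: "a $ 0 \<noteq> 0"
      using ab ab' assms unfolding V_R_def by auto
    have "list_of_vec a = list_of_vec a'" and
      tail: "map (\<lambda>j. a $ 0 * b $ j) [0..<n - k - 1] = map (\<lambda>j. a' $ 0 * b' $ j) [0..<n - k - 1]"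
      using eq dims unfolding f_def by auto
    then have "a = a'"
      by (metis vec_list)
    moreover have "b = b'"
    proof (rule eq_vecI)
      fix j assume "j < dim_vec b'"
      then have "a $ 0 * b $ j = a' $ 0 * b' $ j"
        using arg_cong[OF tail, of "\<lambda>xs. xs ! j"] dims by simp
      then show "b $ j = b' $ j"
        using \<open>a = a'\<close> a0 by simp
    qed (use dims in simp)
    ultimately show "a = a' \<and> b = b'" ..
  qed
  have sub: "f ` V_R q m k n \<subseteq> {xs. set xs \<subseteq> ?S \<and> length xs = n - 1}"
  proof clarify
    fix a b :: "'a vec" assume "(a, b) \<in> V_R q m k n"
    then have dims: "a \<in> carrier_vec k" "b \<in> carrier_vec (n - k - 1)"
      and V: "\<forall>i<k. a $ i \<in> ?S \<and> (\<forall>j<n - k - 1. a $ i * b $ j \<in> ?S)"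
      unfolding V_R_def by auto
    have "set (list_of_vec a) \<subseteq> ?S"
      using V dims by (auto simp: in_set_conv_nth list_of_vec_index)
    then show "set (f (a, b)) \<subseteq> ?S \<and> length (f (a, b)) = n - 1"
      using V dims assms unfolding f_def by auto
  qed
  have "card (V_R q m k n :: ('a vec \<times> 'a vec) set) = card (f ` V_R q m k n)"
    using card_image[OF inj] by simp
  also have "\<dots> \<le> card {xs. set xs \<subseteq> ?S \<and> length xs = n - 1}"
    by (rule card_mono[OF _ sub]) (simp add: finite_lists_length_eq)
  also have "\<dots> = card ?S ^ (n - 1)"
    by (simp add: card_lists_length_eq)
  finally show ?thesis .
qed

theorem lemma4p10:
  fixes q m k n :: nat
  assumes "\<exists>p e. prime p \<and> e > 0 \<and> q = p ^ e"
    and "card (UNIV :: 'a set) = q ^ m"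
    and "m \<ge> 2" and "1 \<le> k" and "k < n"
  shows "bij_betw (psi k n) (V_R q m k n :: ('a::{finite,field} vec \<times> 'a vec) set)
            (R1_star k n \<inter> K_set q m k n)
       \<and> V_R q m k n = (V_R' q m k n :: ('a vec \<times> 'a vec) set)
       \<and> card (R1_star k n \<inter> K_set q m k n :: 'a mat set) \<le> (q ^ (m - 1) - 1) ^ (n - 1)"
proof (intro conjI)
  obtain p e where p: "prime p" "0 < e" "q = p ^ e"
    using assms(1) by blast
  then have q: "2 \<le> q"
    using prime_ge_2_nat[OF p(1)] self_le_power[of p e] by simp
  show bij: "bij_betw (psi k n) (V_R q m k n :: ('a vec \<times> 'a vec) set) (R1_star k n \<inter> K_set q m k n)"
    using bij_betw_psi assms(4,5) .
  show "V_R q m k n = V_R' q m k n"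
    using V_R_eq_V_R' assms(4) .
  have "card (ker_tr q m - {0::'a}) \<le> q ^ (m - 1) - 1"
    using card_ker_tr_le[of q m, where 'a = 'a] zero_in_ker_tr[of q m, where 'a = 'a] q assms(3)
    by (simp add: card_Diff_singleton)
  then have "card (ker_tr q m - {0::'a}) ^ (n - 1) \<le> (q ^ (m - 1) - 1) ^ (n - 1)"
    by (rule power_mono) simp
  then show "card (R1_star k n \<inter> K_set q m k n :: 'a mat set) \<le> (q ^ (m - 1) - 1) ^ (n - 1)"
    using bij_betw_same_card[OF bij] card_V_R_le[OF assms(4,5), of q m, where 'a = 'a] by simp
qed

end
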